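(* For every finite simple graph $G$ we have $m(G)\le |E(\overline{G})|+2$, where $\overline{G}$ is the complement of $G$.
   Context: All graphs are finite, simple and undirected. A list assignment $L$ for a graph $G$ assigns to each vertex $v$ a set $L(v)$ of colors; an $L$-coloring is a proper vertex coloring $c$ of $G$ with $c(v)\in L(v)$ for every vertex $v$. A $k$-list assignment is a list assignment with $|L(v)|=k$ for all $v$. $G$ is uniquely $k$-list colorable (U$k$LC) if there exists a $k$-list assignment $L$ such that $G$ has exactly one $L$-coloring. $G$ has property $M(k)$ if it is not U$k$LC, i.e. for every $k$-list assignment $L$, $G$ has either no $L$-coloring or at least two $L$-colorings. The m-number $m(G)$ is the least integer $k\ge 1$ such that $G$ has property $M(k)$. (Every U$k$LC graph is also U$(k-1)$LC, so $G$ is U$k$LC iff $k<m(G)$.) *)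

theory Defs
  imports Main "HOL-Library.FuncSet"
begin

definition simple_graph :: "'a set \<Rightarrow> ('a \<Rightarrow> 'a \<Rightarrow> bool) \<Rightarrow> bool" where
  "simple_graph V E \<longleftrightarrow> finite V \<and>
     (\<forall>u v. E u v \<longrightarrow> u \<in> V \<and> v \<in> V \<and> u \<noteq> v \<and> E v u)"

definition complement_edges :: "'a set \<Rightarrow> ('a \<Rightarrow> 'a \<Rightarrow> bool) \<Rightarrow> 'a set set" where
  "complement_edges V E = {{u, v} | u v. u \<in> V \<and> v \<in> V \<and> u \<noteq> v \<and> \<not> E u v}"

definition k_list_assignment :: "'a set \<Rightarrow> ('a \<Rightarrow> nat set) \<Rightarrow> nat \<Rightarrow> bool" where
  "k_list_assignment V L k \<longleftrightarrow> (\<forall>v\<in>V. finite (L v) \<and> card (L v) = k)"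

definition L_coloring :: "'a set \<Rightarrow> ('a \<Rightarrow> 'a \<Rightarrow> bool) \<Rightarrow> ('a \<Rightarrow> nat set) \<Rightarrow> ('a \<Rightarrow> nat) \<Rightarrow> bool" where
  "L_coloring V E L c \<longleftrightarrow> c \<in> extensional V \<and> (\<forall>v\<in>V. c v \<in> L v) \<and>
     (\<forall>u\<in>V. \<forall>v\<in>V. E u v \<longrightarrow> c u \<noteq> c v)"

definition uniquely_list_colorable :: "'a set \<Rightarrow> ('a \<Rightarrow> 'a \<Rightarrow> bool) \<Rightarrow> nat \<Rightarrow> bool" where
  "uniquely_list_colorable V E k \<longleftrightarrow>
     (\<exists>L. k_list_assignment V L k \<and> (\<exists>!c. L_coloring V E L c))"

definition property_M :: "'a set \<Rightarrow> ('a \<Rightarrow> 'a \<Rightarrow> bool) \<Rightarrow> nat \<Rightarrow> bool" where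
  "property_M V E k \<longleftrightarrow> \<not> uniquely_list_colorable V E k"

definition m_number :: "'a set \<Rightarrow> ('a \<Rightarrow> 'a \<Rightarrow> bool) \<Rightarrow> nat" where
  "m_number V E = (LEAST k. 1 \<le> k \<and> property_M V E k)"

end

theory Submission
  imports Defs
begin

text \<open>
  Let every list have at least \<open>|E(G\<^sup>c)| + 2\<close> colours and let \<open>c\<close> be an \<open>L\<close>-colouring.
  If \<open>G\<close> is complete, \<open>c\<close> is injective and every vertex \<open>v\<close> has a spare colour \<open>a v\<close>; either some
  spare colour is unused by \<open>c\<close>, or \<open>v \<mapsto> c\<^sup>-\<^sup>1 (a v)\<close> maps \<open>V\<close> into itself and permutes some
  nonempty subset, along which the colours can be rotated.  Otherwise pick a non-edge \<open>vw\<close>,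
  delete \<open>v\<close> and remove \<open>c v\<close> from the lists of its neighbours: the complement loses the edge
  \<open>vw\<close>, so the lists are still long enough, and by induction the restriction of \<open>c\<close> has a
  second colouring, which extends to \<open>G\<close> by colouring \<open>v\<close> with \<open>c v\<close>.
\<close>

lemma finite_selfmap_invariant_subset:
  assumes "finite S" "S \<noteq> {}" "f ` S \<subseteq> S"
  shows "\<exists>T\<subseteq>S. T \<noteq> {} \<and> f ` T = T"
  using assms
proof (induction "card S" arbitrary: S rule: less_induct)
  case less
  show ?case
  proof (cases "f ` S = S")
    case True
    with less.prems show ?thesis by blast
  next
    case False
    with less.prems(3) have "f ` S \<subset> S" by blast
    with less.prems(1) have "card (f ` S) < card S" by (rule psubset_card_mono)
    moreover have "finite (f ` S)" "f ` S \<noteq> {}" "f ` f ` S \<subseteq> f ` S"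
      using less.prems by (auto intro: image_mono)
    ultimately have "\<exists>T\<subseteq>f ` S. T \<noteq> {} \<and> f ` T = T"
      by (rule less.hyps)
    then obtain T where "T \<subseteq> f ` S" "T \<noteq> {}" "f ` T = T"
      by blast
    with less.prems(3) show ?thesis
      by (intro exI[of _ T]) auto
  qed
qed

lemma inj_on_permute_subset:
  assumes "inj_on c V" "T \<subseteq> V" "finite T" "f ` T = T"
  shows "inj_on (\<lambda>x. if x \<in> T then c (f x) else c x) V"
proof -
  have "inj_on f T"
    using assms(3,4) by (simp add: inj_on_iff_eq_card)
  then have "inj_on (\<lambda>x. if x \<in> T then f x else x) V"
    using assms(4) by (auto simp: inj_on_def)
  moreover have "(\<lambda>x. if x \<in> T then f x else x) ` V \<subseteq> V"
    using assms(2,4) by auto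
  ultimately have "inj_on (c \<circ> (\<lambda>x. if x \<in> T then f x else x)) V"
    using assms(1) by (blast intro: comp_inj_on inj_on_subset)
  then show ?thesis
    by (simp add: comp_def if_distrib)
qed

lemma another_injective_choice:
  assumes "finite V" "V \<noteq> {}" "inj_on c V" "\<forall>v\<in>V. c v \<in> L v"
    and spare: "\<forall>v\<in>V. \<exists>x\<in>L v. x \<noteq> c v"
  shows "\<exists>c'. inj_on c' V \<and> (\<forall>v\<in>V. c' v \<in> L v) \<and> (\<exists>v\<in>V. c' v \<noteq> c v)"
proof -
  from spare obtain a where a: "\<forall>v\<in>V. a v \<in> L v \<and> a v \<noteq> c v"
    by metis
  show ?thesis
  proof (cases "\<exists>v\<in>V. a v \<notin> c ` V")
    case True
    then obtain v where v: "v \<in> V" "a v \<notin> c ` V" by blast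
    have "inj_on (c(v := a v)) V"
      using assms(3) v(2) by (rule inj_on_fun_updI)
    with v a assms(4) show ?thesis
      by (intro exI[of _ "c(v := a v)"]) auto
  next
    case False
    define f where "f v = inv_into V c (a v)" for v
    have f: "f v \<in> V" "c (f v) = a v" if "v \<in> V" for v
      using False that unfolding f_def by (auto intro: inv_into_into f_inv_into_f)
    obtain T where T: "T \<subseteq> V" "T \<noteq> {}" "f ` T = T"
      using finite_selfmap_invariant_subset[of V f] assms(1,2) f(1) by blast
    then obtain v where "v \<in> T" by blast
    moreover have "finite T"
      using T(1) assms(1) by (rule finite_subset)
    ultimately show ?thesis
      using inj_on_permute_subset[OF assms(3) T(1) _ T(3)] T(1) f a assms(4)
      by (intro exI[of _ "\<lambda>x. if x \<in> T then c (f x) else c x"]) auto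
  qed
qed

lemma complete_graph_L_coloring_not_unique:
  assumes "finite V" "V \<noteq> {}" "\<forall>u\<in>V. \<forall>w\<in>V. u \<noteq> w \<longrightarrow> E u w"
    and "\<forall>v\<in>V. 2 \<le> card (L v)" "L_coloring V E L c"
  shows "\<exists>c'. c' \<noteq> c \<and> L_coloring V E L c'"
proof -
  have c: "c \<in> extensional V" "\<forall>v\<in>V. c v \<in> L v" "\<forall>u\<in>V. \<forall>v\<in>V. E u v \<longrightarrow> c u \<noteq> c v"
    using assms(5) unfolding L_coloring_def by auto
  then have "inj_on c V"
    using assms(3) unfolding inj_on_def by blast
  moreover have "\<exists>x\<in>L v. x \<noteq> c v" if "v \<in> V" for v
  proof (rule ccontr)
    assume "\<not> ?thesis"
    then have "L v \<subseteq> {c v}" by blast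
    then have "card (L v) \<le> 1"
      using card_mono[of "{c v}"] by simp
    with assms(4) that show False by fastforce
  qed
  ultimately obtain c' where c': "inj_on c' V" "\<forall>v\<in>V. c' v \<in> L v" "\<exists>v\<in>V. c' v \<noteq> c v"
    using another_injective_choice[OF assms(1,2) _ c(2)] by blast
  have "u \<noteq> w" if "u \<in> V" "E u w" for u w
    using c(3) that by blast
  with c'(1,2) have "L_coloring V E L (restrict c' V)"
    unfolding L_coloring_def by (auto dest: inj_onD)
  moreover have "restrict c' V \<noteq> c"
    using c'(3) by auto
  ultimately show ?thesis by blast
qed

definition prune_neighbour_lists ::
    "('a \<Rightarrow> 'a \<Rightarrow> bool) \<Rightarrow> ('a \<Rightarrow> nat set) \<Rightarrow> 'a \<Rightarrow> nat \<Rightarrow> 'a \<Rightarrow> nat set" where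
  "prune_neighbour_lists E L v x u = (if E u v then L u - {x} else L u)"

lemma card_prune_neighbour_lists:
  "card (L u) - 1 \<le> card (prune_neighbour_lists E L v x u)"
  unfolding prune_neighbour_lists_def by (simp add: card_Diff_singleton_if)

lemma L_coloring_delete_vertex:
  assumes "L_coloring V E L c" "v \<in> V"
  shows "L_coloring (V - {v}) E (prune_neighbour_lists E L v (c v)) (restrict c (V - {v}))"
  using assms unfolding L_coloring_def prune_neighbour_lists_def by auto

lemma L_coloring_insert_vertex:
  assumes "\<forall>u w. E u w \<longrightarrow> E w u" "v \<in> V" "\<not> E v v" "x \<in> L v"
    and "L_coloring (V - {v}) E (prune_neighbour_lists E L v x) d"
  shows "L_coloring V E L (d(v := x))"
  using assms unfolding L_coloring_def prune_neighbour_lists_def extensional_def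
  by (auto split: if_splits)

lemma finite_complement_edges:
  "finite V \<Longrightarrow> finite (complement_edges V E)"
  unfolding complement_edges_def
  by (rule finite_subset[of _ "Pow V"]) auto

lemma card_complement_edges_delete_vertex:
  assumes "finite V" "v \<in> V" "w \<in> V" "v \<noteq> w" "\<not> E v w"
  shows "card (complement_edges (V - {v}) E) < card (complement_edges V E)"
proof (rule psubset_card_mono)
  show "finite (complement_edges V E)"
    using assms(1) by (rule finite_complement_edges)
  have "complement_edges (V - {v}) E \<subseteq> complement_edges V E"
    unfolding complement_edges_def by blast
  moreover have "{v, w} \<in> complement_edges V E - complement_edges (V - {v}) E"
    using assms(2-5) unfolding complement_edges_def by (auto simp: doubleton_eq_iff)
  ultimately show "complement_edges (V - {v}) E \<subset> complement_edges V E"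
    by blast
qed

lemma L_coloring_not_unique:
  assumes "finite V" "V \<noteq> {}" "\<forall>u w. E u w \<longrightarrow> E w u"
    and "\<forall>v\<in>V. card (complement_edges V E) + 2 \<le> card (L v)" "L_coloring V E L c"
  shows "\<exists>c'. c' \<noteq> c \<and> L_coloring V E L c'"
  using assms
proof (induction "card V" arbitrary: V L c rule: less_induct)
  case less
  show ?case
  proof (cases "\<forall>u\<in>V. \<forall>w\<in>V. u \<noteq> w \<longrightarrow> E u w")
    case True
    with less.prems show ?thesis
      by (intro complete_graph_L_coloring_not_unique) fastforce+
  next
    case False
    then obtain v w where vw: "v \<in> V" "w \<in> V" "v \<noteq> w" "\<not> E v w" by blast
    let ?L = "prune_neighbour_lists E L v (c v)"
    have fewer: "card (complement_edges (V - {v}) E) < card (complement_edges V E)"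
      using card_complement_edges_delete_vertex[of V v w E, OF less.prems(1) vw] .
    have "card (complement_edges (V - {v}) E) + 2 \<le> card (?L u)" if "u \<in> V - {v}" for u
    proof -
      have "card (complement_edges V E) + 2 \<le> card (L u)"
        using less.prems(4) that by blast
      then show ?thesis
        using fewer card_prune_neighbour_lists[of L u E v "c v"] by linarith
    qed
    moreover have "card (V - {v}) < card V"
      using less.prems(1) vw(1) by (rule card_Diff1_less)
    moreover have "V - {v} \<noteq> {}" "finite (V - {v})"
      using less.prems(1) vw by auto
    ultimately obtain d where d: "d \<noteq> restrict c (V - {v})" "L_coloring (V - {v}) E ?L d"
      using less.hyps less.prems(3) L_coloring_delete_vertex[OF less.prems(5) vw(1)] by blast
    have "\<not> E v v" "c v \<in> L v"
      using less.prems(5) vw(1) unfolding L_coloring_def by auto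
    then have "L_coloring V E L (d(v := c v))"
      using L_coloring_insert_vertex[OF less.prems(3) vw(1)] d(2) by blast
    moreover have "d(v := c v) \<noteq> c"
    proof
      assume "d(v := c v) = c"
      then have "restrict c (V - {v}) = restrict d (V - {v})"
        by (intro restrict_ext) (metis Diff_iff fun_upd_other singletonI)
      also have "\<dots> = d"
        using d(2) unfolding L_coloring_def by (simp add: extensional_restrict)
      finally show False using d(1) by simp
    qed
    ultimately show ?thesis by blast
  qed
qed

theorem lemma2p1:
  fixes V :: "'a set" and E :: "'a \<Rightarrow> 'a \<Rightarrow> bool"
  assumes "simple_graph V E" and "V \<noteq> {}"
  shows "m_number V E \<le> card (complement_edges V E) + 2"
proof -
  let ?k = "card (complement_edges V E) + 2"
  have fin: "finite V" and sym: "\<forall>u w. E u w \<longrightarrow> E w u"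
    using assms(1) unfolding simple_graph_def by auto
  have "\<not> uniquely_list_colorable V E ?k"
  proof
    assume "uniquely_list_colorable V E ?k"
    then obtain L c where L: "k_list_assignment V L ?k" and c: "L_coloring V E L c"
      and unique: "\<forall>c'. L_coloring V E L c' \<longrightarrow> c' = c"
      unfolding uniquely_list_colorable_def by metis
    from L have "\<forall>v\<in>V. ?k \<le> card (L v)"
      unfolding k_list_assignment_def by simp
    with unique show False
      using L_coloring_not_unique[OF fin assms(2) sym _ c] by blast
  qed
  then show ?thesis
    unfolding m_number_def property_M_def by (intro Least_le) simp
qed

end
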